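(* Let $\eta\in\mathbb{R}$, $h>0$, $x_0\in\mathbb{R}$, and let $(\Delta W_n)_{n\ge0}$ be i.i.d. $\mathcal{N}(0,h)$ random variables. Define the Milstein iterates for the SDE $\mathrm{d}x_t=-x_t\,\mathrm{d}t+(1+\eta x_t)\,\mathrm{d}W_t$ by $$x_{n+1}=(1-h)x_n+(1+\eta x_n)\Delta W_n+\tfrac12\eta(1+\eta x_n)\big(\Delta W_n^2-h\big),$$ starting from the deterministic value $x_0$, and let $\mu^{(1)}_n=\mathbb{E}[x_n]$, $\mu^{(2)}_n=\mathbb{E}[x_n^2]$. Then $\mu^{(1)}_{n+1}=(1-h)\mu^{(1)}_n$ (so $\mu^{(1)}_n\to0$ for every $x_0$ if and only if $0<h<2$), $$\mu^{(2)}_{n+1}=\Big(1-(2-\eta^2)h+\big(1+\tfrac12\eta^4\big)h^2\Big)\mu^{(2)}_n+\big(h+\tfrac12h^2\eta^2\big)\big(1+2\eta\mu^{(1)}_n\big),$$ and if $0<h<\dfrac{2-\eta^2}{1+\frac12\eta^4}$ then $$\mu^{(2)}_n\to\frac{1+\frac12h\eta^2}{2-\eta^2-h\big(1+\frac12\eta^4\big)}\quad(n\to\infty),$$ which equals $\frac{1}{2-\eta^2}+O(h)$ as $h\to0$ for fixed $\eta$ with $\eta^2<2$.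
   Context: Here $\Delta W_n$ is independent of $x_0,\dots,x_n$. *)

theory Defs
  imports "HOL-Probability.Probability" "HOL-Library.Landau_Symbols"
begin

fun milstein :: "real \<Rightarrow> real \<Rightarrow> real \<Rightarrow> (nat \<Rightarrow> 'a \<Rightarrow> real) \<Rightarrow> nat \<Rightarrow> 'a \<Rightarrow> real" where
  "milstein eta h x0 dW 0 \<omega> = x0"
| "milstein eta h x0 dW (Suc n) \<omega> =
     (let x = milstein eta h x0 dW n \<omega>; d = dW n \<omega>
      in (1 - h) * x + (1 + eta * x) * d + 1/2 * eta * (1 + eta * x) * (d\<^sup>2 - h))"

end

theory Submission
  imports Defs
begin

text \<open>One Milstein step is affine in the current state: \<open>x\<^sub>n\<^sub>+\<^sub>1 = x\<^sub>n B(\<Delta>W\<^sub>n) + A(\<Delta>W\<^sub>n)\<close> with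
  quadratic polynomials \<open>A, B\<close>. Since \<open>x\<^sub>n\<close> is a function of \<open>\<Delta>W\<^sub>0, \<dots>, \<Delta>W\<^sub>n\<^sub>-\<^sub>1\<close>, it is independent
  of \<open>\<Delta>W\<^sub>n\<close>, so the first two moments of \<open>x\<^sub>n\<^sub>+\<^sub>1\<close> are obtained from those of \<open>x\<^sub>n\<close> and the
  Gaussian moments of \<open>\<Delta>W\<^sub>n\<close> up to order four. This yields the two linear recurrences; the
  mean decays geometrically, and the second moment then satisfies a contracting affine
  recurrence with a convergent inhomogeneity, whose limit is its fixed point.\<close>

definition milstein_step :: "real \<Rightarrow> real \<Rightarrow> real \<Rightarrow> real \<Rightarrow> real" where
  "milstein_step eta h x d = (1 - h) * x + (1 + eta * x) * d + 1/2 * eta * (1 + eta * x) * (d\<^sup>2 - h)"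

lemma milstein_0: "milstein eta h x0 dW 0 = (\<lambda>_. x0)"
  by (simp add: fun_eq_iff)

lemma milstein_Suc:
  "milstein eta h x0 dW (Suc n) = (\<lambda>\<omega>. milstein_step eta h (milstein eta h x0 dW n \<omega>) (dW n \<omega>))"
  by (simp add: fun_eq_iff milstein_step_def Let_def)

lemma milstein_cong:
  assumes "\<And>i. i < n \<Longrightarrow> dW i \<omega> = dW' i \<omega>'"
  shows "milstein eta h x0 dW n \<omega> = milstein eta h x0 dW' n \<omega>'"
  using assms by (induction n) (simp_all add: Let_def)

text \<open>Running the scheme on the coordinate process exhibits \<open>x\<^sub>n\<close> as a measurable function
  of \<open>(\<Delta>W\<^sub>0, \<dots>, \<Delta>W\<^sub>n\<^sub>-\<^sub>1)\<close>.\<close>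

lemma measurable_milstein_coordinates:
  "n \<le> m \<Longrightarrow> milstein eta h x0 (\<lambda>i f. f i) n \<in> borel_measurable (PiM {..<m} (\<lambda>_. borel))"
proof (induction n)
  case (Suc n)
  then have [measurable]: "milstein eta h x0 (\<lambda>i f. f i) n \<in> borel_measurable (PiM {..<m} (\<lambda>_. borel))"
    and [measurable]: "(\<lambda>f. f n) \<in> borel_measurable (PiM {..<m} (\<lambda>_. borel))"
    by (auto intro: measurable_component_singleton)
  show ?case
    unfolding milstein_Suc milstein_step_def by measurable
qed (simp add: milstein_0)

lemma (in prob_space) indep_var_milstein_increment:
  assumes "indep_vars (\<lambda>_. borel) dW UNIV"
  shows "indep_var borel (milstein eta h x0 dW n) borel (dW n)"
proof -
  let ?past = "\<lambda>\<omega>. restrict (\<lambda>i. dW i \<omega>) {..<n}" and ?now = "\<lambda>\<omega>. restrict (\<lambda>i. dW i \<omega>) {n}"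
  have "indep_var (PiM {..<n} (\<lambda>_. borel)) ?past (PiM {n} (\<lambda>_. borel)) ?now"
    using assms by (rule indep_var_restrict) auto
  then have "indep_var borel (milstein eta h x0 (\<lambda>i f. f i) n \<circ> ?past) borel ((\<lambda>f. f n) \<circ> ?now)"
    by (rule indep_var_compose)
      (auto intro: measurable_milstein_coordinates measurable_component_singleton)
  moreover have "milstein eta h x0 (\<lambda>i f. f i) n \<circ> ?past = milstein eta h x0 dW n"
    by (auto simp: fun_eq_iff intro: milstein_cong)
  ultimately show ?thesis
    by (simp add: comp_def)
qed

lemma (in prob_space) indep_var_integral_mult:
  fixes f g :: "real \<Rightarrow> real"
  assumes "indep_var borel X borel Y" "f \<in> borel_measurable borel" "g \<in> borel_measurable borel"
    and "integrable M (\<lambda>\<omega>. f (X \<omega>))" "integrable M (\<lambda>\<omega>. g (Y \<omega>))"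
  shows "integrable M (\<lambda>\<omega>. f (X \<omega>) * g (Y \<omega>))"
    and "expectation (\<lambda>\<omega>. f (X \<omega>) * g (Y \<omega>)) = expectation (\<lambda>\<omega>. f (X \<omega>)) * expectation (\<lambda>\<omega>. g (Y \<omega>))"
proof -
  have "indep_var borel (f \<circ> X) borel (g \<circ> Y)"
    using assms(1-3) by (rule indep_var_compose)
  then show "integrable M (\<lambda>\<omega>. f (X \<omega>) * g (Y \<omega>))"
    and "expectation (\<lambda>\<omega>. f (X \<omega>) * g (Y \<omega>)) = expectation (\<lambda>\<omega>. f (X \<omega>)) * expectation (\<lambda>\<omega>. g (Y \<omega>))"
    using indep_var_integrable indep_var_lebesgue_integral assms(4,5) by (simp_all add: comp_def)
qed

lemma (in prob_space) centred_normal_moments: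
  assumes "0 < \<sigma>" and D: "distributed M lborel X (normal_density 0 \<sigma>)"
  shows "integrable M (\<lambda>\<omega>. X \<omega> ^ k)"
    and "expectation X = 0" "expectation (\<lambda>\<omega>. X \<omega> ^ 2) = \<sigma>\<^sup>2"
    and "expectation (\<lambda>\<omega>. X \<omega> ^ 3) = 0" "expectation (\<lambda>\<omega>. X \<omega> ^ 4) = 3 * \<sigma> ^ 4"
proof -
  have moment: "expectation (\<lambda>\<omega>. X \<omega> ^ k) = (\<integral>x. normal_density 0 \<sigma> x * x ^ k \<partial>lborel)" for k
    by (rule distributed_integral[OF D, symmetric]) auto
  show "integrable M (\<lambda>\<omega>. X \<omega> ^ k)"
    using distributed_integrable[OF D, of "\<lambda>x. x ^ k"] integrable_normal_moment[OF \<open>0 < \<sigma>\<close>, of 0 k]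
    by simp
  show "expectation X = 0"
    using moment[of 1] integral_normal_moment_odd[OF \<open>0 < \<sigma>\<close>, of 0 0] by simp
  show "expectation (\<lambda>\<omega>. X \<omega> ^ 3) = 0"
    using moment[of 3] integral_normal_moment_odd[OF \<open>0 < \<sigma>\<close>, of 0 1] by (simp add: numeral_3_eq_3)
  show "expectation (\<lambda>\<omega>. X \<omega> ^ 2) = \<sigma>\<^sup>2"
    using moment[of 2] integral_normal_moment_even[OF \<open>0 < \<sigma>\<close>, of 0 1] \<open>0 < \<sigma>\<close> by simp
  show "expectation (\<lambda>\<omega>. X \<omega> ^ 4) = 3 * \<sigma> ^ 4"
    using moment[of 4] integral_normal_moment_even[OF \<open>0 < \<sigma>\<close>, of 0 2] \<open>0 < \<sigma>\<close>
    by (simp add: fact_numeral field_simps)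
qed

lemma (in prob_space) integral_normal_quadratic_product:
  assumes "0 < \<sigma>" and D: "distributed M lborel X (normal_density 0 \<sigma>)"
    and p: "\<And>x. p x = a0 + a1 * x + a2 * x\<^sup>2" and q: "\<And>x. q x = b0 + b1 * x + b2 * x\<^sup>2"
  shows "integrable M (\<lambda>\<omega>. p (X \<omega>) * q (X \<omega>))"
    and "expectation (\<lambda>\<omega>. p (X \<omega>) * q (X \<omega>))
           = a0 * b0 + (a0 * b2 + a1 * b1 + a2 * b0) * \<sigma>\<^sup>2 + 3 * a2 * b2 * \<sigma> ^ 4"
proof -
  note moments = centred_normal_moments[OF assms(1,2)]
  have expand: "(\<lambda>\<omega>. p (X \<omega>) * q (X \<omega>)) = (\<lambda>\<omega>. a0 * b0 + (a0 * b1 + a1 * b0) * X \<omega>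
      + (a0 * b2 + a1 * b1 + a2 * b0) * X \<omega> ^ 2 + (a1 * b2 + a2 * b1) * X \<omega> ^ 3 + a2 * b2 * X \<omega> ^ 4)"
    by (simp add: fun_eq_iff p q algebra_simps power2_eq_square power3_eq_cube power4_eq_xxxx)
  have "integrable M X"
    using moments(1)[of 1] by simp
  then show "integrable M (\<lambda>\<omega>. p (X \<omega>) * q (X \<omega>))"
    and "expectation (\<lambda>\<omega>. p (X \<omega>) * q (X \<omega>))
           = a0 * b0 + (a0 * b2 + a1 * b1 + a2 * b0) * \<sigma>\<^sup>2 + 3 * a2 * b2 * \<sigma> ^ 4"
    unfolding expand using moments by (simp_all add: prob_space)
qed

lemma (in prob_space) milstein_step_moments:
  assumes indep: "indep_var borel X borel D"
    and D: "distributed M lborel D (normal_density 0 (sqrt h))" and "0 < h"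
    and X1: "integrable M X" and X2: "integrable M (\<lambda>\<omega>. (X \<omega>)\<^sup>2)"
  shows "integrable M (\<lambda>\<omega>. milstein_step eta h (X \<omega>) (D \<omega>))"
    and "integrable M (\<lambda>\<omega>. (milstein_step eta h (X \<omega>) (D \<omega>))\<^sup>2)"
    and "expectation (\<lambda>\<omega>. milstein_step eta h (X \<omega>) (D \<omega>)) = (1 - h) * expectation X"
    and "expectation (\<lambda>\<omega>. (milstein_step eta h (X \<omega>) (D \<omega>))\<^sup>2)
           = (1 - (2 - eta\<^sup>2) * h + (1 + 1/2 * eta ^ 4) * h\<^sup>2) * expectation (\<lambda>\<omega>. (X \<omega>)\<^sup>2)
             + (h + 1/2 * h\<^sup>2 * eta\<^sup>2) * (1 + 2 * eta * expectation X)"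
proof -
  define A where "A d = d + 1/2 * eta * (d\<^sup>2 - h)" for d
  define B where "B d = 1 - h + eta * d + 1/2 * eta\<^sup>2 * (d\<^sup>2 - h)" for d
  have A: "A d = - (1/2 * eta * h) + 1 * d + 1/2 * eta * d\<^sup>2" for d
    by (simp add: A_def algebra_simps)
  have B: "B d = (1 - h - 1/2 * eta\<^sup>2 * h) + eta * d + 1/2 * eta\<^sup>2 * d\<^sup>2" for d
    by (simp add: B_def field_simps)
  have one: "(\<lambda>_. 1) d = 1 + 0 * d + 0 * d\<^sup>2" for d :: real
    by simp
  have [simp]: "sqrt h ^ 2 = h" "sqrt h ^ 4 = h\<^sup>2"
    using \<open>0 < h\<close> by (simp_all add: power4_eq_xxxx power2_eq_square flip: real_sqrt_mult)
  note quadratic = integral_normal_quadratic_product[OF real_sqrt_gt_zero[OF \<open>0 < h\<close>] D]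
  have EA: "integrable M (\<lambda>\<omega>. A (D \<omega>))" "expectation (\<lambda>\<omega>. A (D \<omega>)) = 0"
    using quadratic[OF A one] by simp_all
  have EB: "integrable M (\<lambda>\<omega>. B (D \<omega>))" "expectation (\<lambda>\<omega>. B (D \<omega>)) = 1 - h"
    using quadratic[OF B one] by (simp_all add: algebra_simps)
  have EAA: "integrable M (\<lambda>\<omega>. A (D \<omega>) * A (D \<omega>))"
    "expectation (\<lambda>\<omega>. A (D \<omega>) * A (D \<omega>)) = h + 1/2 * h\<^sup>2 * eta\<^sup>2"
    using quadratic[OF A A] \<open>0 < h\<close> by (simp_all add: algebra_simps power2_eq_square)
  have EAB: "integrable M (\<lambda>\<omega>. A (D \<omega>) * B (D \<omega>))"
    "expectation (\<lambda>\<omega>. A (D \<omega>) * B (D \<omega>)) = eta * (h + 1/2 * h\<^sup>2 * eta\<^sup>2)"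
    using quadratic[OF A B] \<open>0 < h\<close> by (simp_all add: algebra_simps power2_eq_square)
  have EBB: "integrable M (\<lambda>\<omega>. B (D \<omega>) * B (D \<omega>))"
    "expectation (\<lambda>\<omega>. B (D \<omega>) * B (D \<omega>)) = 1 - (2 - eta\<^sup>2) * h + (1 + 1/2 * eta ^ 4) * h\<^sup>2"
    using quadratic[OF B B] \<open>0 < h\<close> by (simp_all add: algebra_simps power2_eq_square power4_eq_xxxx)
  have [measurable]: "A \<in> borel_measurable borel" "B \<in> borel_measurable borel"
    unfolding A_def[abs_def] B_def[abs_def] by measurable
  have step: "milstein_step eta h x d = x * B d + A d" for x d
    by (simp add: milstein_step_def A_def B_def field_simps power2_eq_square)
  have step_sq: "(milstein_step eta h x d)\<^sup>2 = x\<^sup>2 * (B d * B d) + 2 * (x * (A d * B d)) + A d * A d"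
    for x d by (simp add: step power2_eq_square algebra_simps)
  note XB = indep_var_integral_mult[OF indep, of "\<lambda>x. x" B]
  note XXBB = indep_var_integral_mult[OF indep, of "\<lambda>x. x\<^sup>2" "\<lambda>d. B d * B d"]
  note XAB = indep_var_integral_mult[OF indep, of "\<lambda>x. x" "\<lambda>d. A d * B d"]
  show "integrable M (\<lambda>\<omega>. milstein_step eta h (X \<omega>) (D \<omega>))"
    "expectation (\<lambda>\<omega>. milstein_step eta h (X \<omega>) (D \<omega>)) = (1 - h) * expectation X"
    unfolding step using XB X1 EA EB by (simp_all add: algebra_simps)
  show "integrable M (\<lambda>\<omega>. (milstein_step eta h (X \<omega>) (D \<omega>))\<^sup>2)"
    unfolding step_sq using XXBB XAB X1 X2 EAA EAB EBB by simp
  have "expectation (\<lambda>\<omega>. (milstein_step eta h (X \<omega>) (D \<omega>))\<^sup>2)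
      = expectation (\<lambda>\<omega>. (X \<omega>)\<^sup>2) * expectation (\<lambda>\<omega>. B (D \<omega>) * B (D \<omega>))
        + 2 * (expectation X * expectation (\<lambda>\<omega>. A (D \<omega>) * B (D \<omega>)))
        + expectation (\<lambda>\<omega>. A (D \<omega>) * A (D \<omega>))"
    unfolding step_sq using XXBB XAB X1 X2 EAA EAB EBB by simp
  then show "expectation (\<lambda>\<omega>. (milstein_step eta h (X \<omega>) (D \<omega>))\<^sup>2)
           = (1 - (2 - eta\<^sup>2) * h + (1 + 1/2 * eta ^ 4) * h\<^sup>2) * expectation (\<lambda>\<omega>. (X \<omega>)\<^sup>2)
             + (h + 1/2 * h\<^sup>2 * eta\<^sup>2) * (1 + 2 * eta * expectation X)"
    unfolding EAA EAB EBB by (simp add: algebra_simps)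
qed

locale gaussian_increments = prob_space +
  fixes h :: real and dW :: "nat \<Rightarrow> 'a \<Rightarrow> real"
  assumes h_pos: "0 < h"
    and increment_normal: "\<And>n. distributed M lborel (dW n) (normal_density 0 (sqrt h))"
    and increments_indep: "indep_vars (\<lambda>_. borel) dW UNIV"
begin

lemma integrable_milstein:
  "integrable M (milstein eta h x0 dW n) \<and> integrable M (\<lambda>\<omega>. (milstein eta h x0 dW n \<omega>)\<^sup>2)"
proof (induction n)
  case (Suc n)
  then show ?case
    unfolding milstein_Suc
    using milstein_step_moments(1,2)[OF indep_var_milstein_increment[OF increments_indep]
        increment_normal h_pos]
    by blast
qed (simp add: milstein_0)

lemma milstein_moments_Suc:
  "expectation (milstein eta h x0 dW (Suc n)) = (1 - h) * expectation (milstein eta h x0 dW n)"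
  "expectation (\<lambda>\<omega>. (milstein eta h x0 dW (Suc n) \<omega>)\<^sup>2)
     = (1 - (2 - eta\<^sup>2) * h + (1 + 1/2 * eta ^ 4) * h\<^sup>2) * expectation (\<lambda>\<omega>. (milstein eta h x0 dW n \<omega>)\<^sup>2)
       + (h + 1/2 * h\<^sup>2 * eta\<^sup>2) * (1 + 2 * eta * expectation (milstein eta h x0 dW n))"
  unfolding milstein_Suc
  using milstein_step_moments(3,4)[OF indep_var_milstein_increment[OF increments_indep] increment_normal h_pos]
    integrable_milstein
  by blast+

lemma milstein_mean: "expectation (milstein eta h x0 dW n) = (1 - h) ^ n * x0"
  by (induction n) (simp_all add: milstein_0 milstein_moments_Suc prob_space del: milstein.simps)

end

lemma LIMSEQ_power_mult_zero_iff: "(\<forall>c. (\<lambda>n. q ^ n * c) \<longlonglongrightarrow> 0) \<longleftrightarrow> \<bar>q\<bar> < (1::real)"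
proof
  assume "\<forall>c. (\<lambda>n. q ^ n * c) \<longlonglongrightarrow> 0"
  then have "(\<lambda>n. q ^ n * 1) \<longlonglongrightarrow> 0" ..
  then have "(\<lambda>n. q ^ n) \<longlonglongrightarrow> 0"
    by simp
  then have "(\<lambda>n. \<bar>q\<bar> ^ n) \<longlonglongrightarrow> 0"
    using tendsto_rabs[of "\<lambda>n. q ^ n" 0] by (simp add: power_abs)
  moreover have "\<not> (\<lambda>n. \<bar>q\<bar> ^ n) \<longlonglongrightarrow> 0" if "1 \<le> \<bar>q\<bar>"
    using LIMSEQ_le_const[of "\<lambda>n. \<bar>q\<bar> ^ n" 0 1] that by (auto simp: one_le_power)
  ultimately show "\<bar>q\<bar> < 1"
    by force
next
  assume "\<bar>q\<bar> < 1"
  then show "\<forall>c. (\<lambda>n. q ^ n * c) \<longlonglongrightarrow> 0"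
    by (simp add: tendsto_mult_left_zero LIMSEQ_power_zero)
qed

lemma LIMSEQ_linear_recurrence_zero:
  fixes e u :: "nat \<Rightarrow> real"
  assumes r: "\<bar>r\<bar> < 1" and u: "u \<longlonglongrightarrow> 0" and e: "\<And>n. e (Suc n) = r * e n + u n"
  shows "e \<longlonglongrightarrow> 0"
proof (rule tendstoI)
  fix \<epsilon> :: real assume "0 < \<epsilon>"
  then have "0 < \<epsilon> * (1 - \<bar>r\<bar>) / 2"
    using r by simp
  then obtain N where N: "\<And>n. N \<le> n \<Longrightarrow> \<bar>u n\<bar> < \<epsilon> * (1 - \<bar>r\<bar>) / 2"
    using LIMSEQ_D[OF u] by (metis real_norm_def diff_zero)
  have bound: "\<bar>e (k + N)\<bar> \<le> \<bar>r\<bar> ^ k * \<bar>e N\<bar> + \<epsilon> / 2" for k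
  proof (induction k)
    case 0
    show ?case using \<open>0 < \<epsilon>\<close> by simp
  next
    case (Suc k)
    have "\<bar>e (Suc k + N)\<bar> \<le> \<bar>r\<bar> * \<bar>e (k + N)\<bar> + \<bar>u (k + N)\<bar>"
      using e[of "k + N"] abs_triangle_ineq[of "r * e (k + N)"] by (simp add: abs_mult)
    also have "\<dots> \<le> \<bar>r\<bar> * (\<bar>r\<bar> ^ k * \<bar>e N\<bar> + \<epsilon> / 2) + \<epsilon> * (1 - \<bar>r\<bar>) / 2"
      using Suc.IH N[of "k + N"] by (intro add_mono mult_left_mono) auto
    also have "\<dots> = \<bar>r\<bar> ^ Suc k * \<bar>e N\<bar> + \<epsilon> / 2"
      by (simp add: field_simps)
    finally show ?case .
  qed
  have "(\<lambda>k. \<bar>r\<bar> ^ k * \<bar>e N\<bar>) \<longlonglongrightarrow> 0"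
    using r by (intro tendsto_mult_left_zero LIMSEQ_power_zero) simp
  then have "\<forall>\<^sub>F k in sequentially. \<bar>r\<bar> ^ k * \<bar>e N\<bar> < \<epsilon> / 2"
    using \<open>0 < \<epsilon>\<close> by (intro order_tendstoD) auto
  then have "\<forall>\<^sub>F k in sequentially. dist (e (k + N)) 0 < \<epsilon>"
  proof eventually_elim
    case (elim k)
    with bound[of k] show ?case by simp
  qed
  then show "\<forall>\<^sub>F n in sequentially. dist (e n) 0 < \<epsilon>"
    using eventually_sequentially_seg[of "\<lambda>n. dist (e n) 0 < \<epsilon>" N] by simp
qed

lemma LIMSEQ_linear_recurrence:
  fixes e u :: "nat \<Rightarrow> real"
  assumes "\<bar>r\<bar> < 1" and "u \<longlonglongrightarrow> b" and "\<And>n. e (Suc n) = r * e n + u n"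
  shows "e \<longlonglongrightarrow> b / (1 - r)"
proof -
  have "(\<lambda>n. e n - b / (1 - r)) \<longlonglongrightarrow> 0"
  proof (rule LIMSEQ_linear_recurrence_zero)
    show "(\<lambda>n. u n - b) \<longlonglongrightarrow> 0"
      using \<open>u \<longlonglongrightarrow> b\<close> by (simp add: LIM_zero)
    show "e (Suc n) - b / (1 - r) = r * (e n - b / (1 - r)) + (u n - b)" for n
      using \<open>\<bar>r\<bar> < 1\<close> assms(3)[of n] by (simp add: field_simps)
  qed fact
  then show ?thesis
    by (simp add: LIM_zero_iff)
qed

lemma mobius_minus_value_bigo_at_0:
  fixes a b c d :: real
  assumes "c \<noteq> 0"
  shows "(\<lambda>k. (a + b * k) / (c + d * k) - a / c) \<in> O[at 0](\<lambda>k. k)"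
proof (rule bigoI_tendsto)
  have "((\<lambda>k. c + d * k) \<longlongrightarrow> c) (at 0)"
    by (auto intro!: tendsto_eq_intros)
  then have "\<forall>\<^sub>F k in at 0. c + d * k \<noteq> 0"
    using assms by (rule tendsto_imp_eventually_ne)
  moreover have "\<forall>\<^sub>F k in at (0::real). k \<noteq> 0"
    by (simp add: eventually_at_filter)
  ultimately have quotient: "\<forall>\<^sub>F k in at 0. (b * c - a * d) / (c * (c + d * k))
      = ((a + b * k) / (c + d * k) - a / c) / k"
    by eventually_elim (use assms in \<open>simp add: divide_simps, simp add: algebra_simps\<close>)
  have "((\<lambda>k. (b * c - a * d) / (c * (c + d * k))) \<longlongrightarrow> (b * c - a * d) / (c * c)) (at 0)"
    using assms by (auto intro!: tendsto_eq_intros)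
  from this quotient show "((\<lambda>k. ((a + b * k) / (c + d * k) - a / c) / k) \<longlongrightarrow> (b * c - a * d) / (c * c)) (at 0)"
    by (rule Lim_transform_eventually)
  show "\<forall>\<^sub>F k in at (0::real). k \<noteq> 0"
    by (simp add: eventually_at_filter)
qed

lemma milstein_mean_square_contraction:
  fixes eta h :: real
  assumes "0 < h" and "h < (2 - eta\<^sup>2) / (1 + 1/2 * eta ^ 4)"
  defines "\<rho> \<equiv> 1 - (2 - eta\<^sup>2) * h + (1 + 1/2 * eta ^ 4) * h\<^sup>2"
  shows "\<bar>\<rho>\<bar> < 1" and "h < 2"
    and "(h + 1/2 * h\<^sup>2 * eta\<^sup>2) / (1 - \<rho>) = (1 + 1/2 * h * eta\<^sup>2) / (2 - eta\<^sup>2 - h * (1 + 1/2 * eta ^ 4))"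
proof -
  define q where "q = 2 - eta\<^sup>2 - h * (1 + 1/2 * eta ^ 4)"
  have "0 < 1 + 1/2 * eta ^ 4"
    by (simp add: add_pos_nonneg)
  then have "0 < q"
    using assms(2) by (simp add: q_def pos_less_divide_eq mult.commute)
  have gap: "1 - \<rho> = h * q"
    by (simp add: \<rho>_def q_def algebra_simps power2_eq_square)
  have "\<rho> = (1 - h)\<^sup>2 + eta\<^sup>2 * h + 1/2 * eta ^ 4 * h\<^sup>2"
    by (simp add: \<rho>_def algebra_simps power2_eq_square)
  then have "0 \<le> \<rho>"
    using \<open>0 < h\<close> by (simp add: zero_le_even_power)
  moreover have "0 < 1 - \<rho>"
    using gap \<open>0 < h\<close> \<open>0 < q\<close> by simp
  ultimately show "\<bar>\<rho>\<bar> < 1"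
    by simp
  have "h \<le> h * (1 + 1/2 * eta ^ 4)"
    using \<open>0 < h\<close> by (simp add: zero_le_even_power)
  moreover have "h * (1 + 1/2 * eta ^ 4) < 2 - eta\<^sup>2"
    using \<open>0 < q\<close> by (simp add: q_def)
  ultimately show "h < 2"
    using zero_le_power2[of eta] by linarith
  have "(h + 1/2 * h\<^sup>2 * eta\<^sup>2) / (1 - \<rho>) = (h * (1 + 1/2 * h * eta\<^sup>2)) / (h * q)"
    by (simp add: gap power2_eq_square algebra_simps)
  then show "(h + 1/2 * h\<^sup>2 * eta\<^sup>2) / (1 - \<rho>) = (1 + 1/2 * h * eta\<^sup>2) / (2 - eta\<^sup>2 - h * (1 + 1/2 * eta ^ 4))"
    using \<open>0 < h\<close> by (simp add: q_def)
qed

theorem mainTheorem5: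
  fixes M :: "'a measure" and eta h x0 :: real and dW :: "nat \<Rightarrow> 'a \<Rightarrow> real"
  assumes "prob_space M"
    and "h > 0"
    and "\<And>n. distributed M lborel (dW n) (normal_density 0 (sqrt h))"
    and "prob_space.indep_vars M (\<lambda>_. borel) dW UNIV"
  defines "mu1 \<equiv> (\<lambda>n. integral\<^sup>L M (milstein eta h x0 dW n))"
    and "mu2 \<equiv> (\<lambda>n. integral\<^sup>L M (\<lambda>\<omega>. (milstein eta h x0 dW n \<omega>)\<^sup>2))"
  shows "(\<forall>n. mu1 (Suc n) = (1 - h) * mu1 n)
    \<and> ((\<forall>y0. (\<lambda>n. integral\<^sup>L M (milstein eta h y0 dW n)) \<longlonglongrightarrow> 0) \<longleftrightarrow> (0 < h \<and> h < 2))
    \<and> (\<forall>n. mu2 (Suc n) = (1 - (2 - eta\<^sup>2) * h + (1 + 1/2 * eta ^ 4) * h\<^sup>2) * mu2 n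
                         + (h + 1/2 * h\<^sup>2 * eta\<^sup>2) * (1 + 2 * eta * mu1 n))
    \<and> (0 < h \<and> h < (2 - eta\<^sup>2) / (1 + 1/2 * eta ^ 4) \<longrightarrow>
         mu2 \<longlonglongrightarrow> (1 + 1/2 * h * eta\<^sup>2) / (2 - eta\<^sup>2 - h * (1 + 1/2 * eta ^ 4)))
    \<and> (eta\<^sup>2 < 2 \<longrightarrow>
         (\<lambda>k. (1 + 1/2 * k * eta\<^sup>2) / (2 - eta\<^sup>2 - k * (1 + 1/2 * eta ^ 4)) - 1 / (2 - eta\<^sup>2))
           \<in> O[at 0](\<lambda>k. k))"
proof -
  interpret gaussian_increments M h dW
    using assms(1-4) by (simp add: gaussian_increments_def gaussian_increments_axioms_def)
  have mu1_Suc: "mu1 (Suc n) = (1 - h) * mu1 n" for n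
    unfolding mu1_def by (rule milstein_moments_Suc(1))
  have mu2_Suc: "mu2 (Suc n) = (1 - (2 - eta\<^sup>2) * h + (1 + 1/2 * eta ^ 4) * h\<^sup>2) * mu2 n
      + (h + 1/2 * h\<^sup>2 * eta\<^sup>2) * (1 + 2 * eta * mu1 n)" for n
    unfolding mu1_def mu2_def by (rule milstein_moments_Suc(2))
  have mean_decay: "(\<forall>y0. (\<lambda>n. integral\<^sup>L M (milstein eta h y0 dW n)) \<longlonglongrightarrow> 0) \<longleftrightarrow> 0 < h \<and> h < 2"
    unfolding milstein_mean LIMSEQ_power_mult_zero_iff by auto
  have mu2_limit: "mu2 \<longlonglongrightarrow> (1 + 1/2 * h * eta\<^sup>2) / (2 - eta\<^sup>2 - h * (1 + 1/2 * eta ^ 4))"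
    if "h < (2 - eta\<^sup>2) / (1 + 1/2 * eta ^ 4)"
  proof -
    note contraction = milstein_mean_square_contraction[OF h_pos that]
    have "mu1 \<longlonglongrightarrow> 0"
      using mean_decay contraction(2) h_pos unfolding mu1_def by blast
    then have "(\<lambda>n. (h + 1/2 * h\<^sup>2 * eta\<^sup>2) * (1 + 2 * eta * mu1 n)) \<longlonglongrightarrow> h + 1/2 * h\<^sup>2 * eta\<^sup>2"
      by (auto intro!: tendsto_eq_intros)
    from LIMSEQ_linear_recurrence[OF contraction(1) this mu2_Suc] show ?thesis
      unfolding contraction(3) .
  qed
  have "eta\<^sup>2 < 2 \<longrightarrow>
      (\<lambda>k. (1 + 1/2 * k * eta\<^sup>2) / (2 - eta\<^sup>2 - k * (1 + 1/2 * eta ^ 4)) - 1 / (2 - eta\<^sup>2)) \<in> O[at 0](\<lambda>k. k)"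
    using mobius_minus_value_bigo_at_0[of "2 - eta\<^sup>2" 1 "1/2 * eta\<^sup>2" "- (1 + 1/2 * eta ^ 4)"]
    by (simp add: algebra_simps)
  with mu1_Suc mu2_Suc mean_decay mu2_limit show ?thesis
    by blast
qed

end
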